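(* For every integer $L\geq 0$, \[ \sum_{j=-\infty}^{\infty} q^{\binom{j-1}{2}} \left(\frac{j}{3}\right) {2L+1 \brack L+j}_q = q^L\,\frac{(-1;q^3)_L}{(-1;q)_L}\,\bigl(1+q-q^{L+1}\bigr), \] where $\binom{j-1}{2}=\frac{(j-1)(j-2)}{2}$.
   Context: For a variable $a$ and integer $n\ge 0$, $(a;q)_n=(1-a)(1-aq)\cdots(1-aq^{n-1})$ (with $(a;q)_0=1$). The $q$-binomial coefficient is ${A \brack B}_q=\frac{(q;q)_A}{(q;q)_B(q;q)_{A-B}}$ if $0\le B\le A$ are integers, and $0$ otherwise. $\left(\frac{j}{3}\right)$ is the Legendre symbol modulo 3: it equals $1$ if $j\equiv 1 \pmod 3$, $-1$ if $j\equiv -1\pmod 3$, and $0$ if $3\mid j$. *)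

theory Defs
  imports "HOL-Computational_Algebra.Formal_Power_Series" "HOL-Number_Theory.Number_Theory"
begin

definition qpoch :: "'a::comm_ring_1 \<Rightarrow> 'a \<Rightarrow> nat \<Rightarrow> 'a" where
  "qpoch a q n = (\<Prod>k<n. 1 - a * q ^ k)"

definition qbinom :: "'a::field fps \<Rightarrow> int \<Rightarrow> int \<Rightarrow> 'a fps" where
  "qbinom q A B = (if 0 \<le> B \<and> B \<le> A
      then qpoch q q (nat A) / (qpoch q q (nat B) * qpoch q q (nat (A - B)))
      else 0)"

end

theory Submission
  imports Defs
begin

(* Write T_L(j) = q^((j-1)(j-2)/2) [2L+1, L+j] for the summands. Two applications of the q-Pascal
   rule give the three-term recurrence
     T_(L+1)(j) = q^(L+2) T_L(j+1) + (1 + q^(2L+2)) T_L(j) + q^L T_L(j-1),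
   so the weighted sums S_L(w) = sum_j w(j) T_L(j) satisfy a recurrence in the shifted weights
   w(j - 1), w(j + 1). For the Legendre symbol chi mod 3, any three consecutive values sum to zero
   and chi has period 3, so S_L(chi) and S_L(chi(. - 1)) satisfy a closed linear recurrence, and
   their closed forms are proved together by induction on L. The quotient on the right-hand side
   is prod_(k<L) (1 - q^k + q^(2k)), because 1 + x^3 = (1 + x)(1 - x + x^2). *)

unbundle fps_syntax

lemma qpoch_0 [simp]: "qpoch a q 0 = 1"
  by (simp add: qpoch_def)

lemma qpoch_Suc: "qpoch a q (Suc n) = qpoch a q n * (1 - a * q ^ n)"
  by (simp add: qpoch_def)

definition phi6_prod :: "'a::comm_ring_1 \<Rightarrow> nat \<Rightarrow> 'a" where
  "phi6_prod q n = (\<Prod>k<n. 1 - q ^ k + q ^ (2 * k))"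

lemma qpoch_minus_one_cube: "qpoch (-1) (q ^ 3) n = phi6_prod q n * qpoch (-1) q n"
proof (induction n)
  case 0
  then show ?case by (simp add: phi6_prod_def)
next
  case (Suc n)
  have "(q ^ 3) ^ n = (q ^ n) ^ 3" "q ^ (2 * n) = (q ^ n) ^ 2"
    by (simp_all flip: power_mult add: mult.commute)
  then have "1 + (q ^ 3) ^ n = (1 - q ^ n + q ^ (2 * n)) * (1 + q ^ n)"
    by (simp add: algebra_simps power2_eq_square power3_eq_cube)
  with Suc.IH show ?case
    by (simp add: qpoch_Suc phi6_prod_def mult_ac)
qed

lemma qbinom_outside: "B < 0 \<or> A < B \<Longrightarrow> qbinom q A B = 0"
  by (auto simp: qbinom_def)

lemma qbinom_sym: "0 \<le> A \<Longrightarrow> qbinom q A B = qbinom q A (A - B)" for A :: int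
  by (auto simp: qbinom_def mult.commute)

lemma qpoch_minus_one_nonzero:
  fixes q :: "'a::field_char_0 fps"
  assumes "q $ 0 = 0"
  shows "qpoch (-1) q n \<noteq> 0"
proof (induction n)
  case (Suc n)
  have "(1 + q ^ n) $ 0 \<noteq> 0"
    using assms by (cases n) simp_all
  then have "1 + q ^ n \<noteq> 0"
    by (metis fps_zero_nth)
  with Suc.IH show ?case
    by (simp add: qpoch_Suc)
qed simp

definition triangular :: "int \<Rightarrow> int" where
  "triangular n = n * (n + 1) div 2"

lemma triangular_nonneg: "0 \<le> triangular n"
proof -
  have "0 \<le> n * (n + 1)"
    by (cases "0 \<le> n") (simp_all add: mult_nonpos_nonpos)
  then show ?thesis
    by (simp add: triangular_def)
qed

lemma triangular_succ: "triangular (n + 1) = triangular n + n + 1"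
proof -
  have "(n + 1) * (n + 1 + 1) = n * (n + 1) + 2 * (n + 1)"
    by (simp add: algebra_simps)
  then show ?thesis
    by (simp add: triangular_def)
qed

definition qterm :: "'a::field fps \<Rightarrow> nat \<Rightarrow> int \<Rightarrow> 'a fps" where
  "qterm q L j = q ^ nat (triangular (j - 2)) * qbinom q (2 * int L + 1) (int L + j)"

definition qterm_sum :: "'a::field fps \<Rightarrow> nat \<Rightarrow> (int \<Rightarrow> int) \<Rightarrow> 'a fps" where
  "qterm_sum q L w = (\<Sum>j\<in>{- int L .. int L + 1}. of_int (w j) * qterm q L j)"

lemma qterm_outside: "j < - int L \<or> int L + 1 < j \<Longrightarrow> qterm q L j = 0"
  by (auto simp: qterm_def qbinom_outside)

lemma qterm_sum_superset:
  assumes "a \<le> - int L" "int L + 1 \<le> b"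
  shows "(\<Sum>j\<in>{a..b}. of_int (w j) * qterm q L j) = qterm_sum q L w"
  unfolding qterm_sum_def
  by (rule sum.mono_neutral_right) (use assms in \<open>auto simp: qterm_outside\<close>)

lemma sum_int_shift: "(\<Sum>j\<in>{a..b::int}. g (j + c)) = (\<Sum>j\<in>{a + c..b + c}. g j)"
  by (rule sum.reindex_bij_witness[of _ "\<lambda>j. j - c" "\<lambda>j. j + c"]) auto

lemma sum_qterm_shift:
  assumes "a + c \<le> - int L" "int L + 1 \<le> b + c"
  shows "(\<Sum>j\<in>{a..b}. of_int (w j) * qterm q L (j + c))
           = qterm_sum q L (\<lambda>j. w (j - c))"
  using sum_int_shift[where g = "\<lambda>j. of_int (w (j - c)) * qterm q L j"
      and a = a and b = b and c = c]
    qterm_sum_superset[OF assms, where w = "\<lambda>j. w (j - c)" and q = q]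
  by simp

lemma Legendre_3: "Legendre j 3 = (if j mod 3 = 1 then 1 else if j mod 3 = 2 then -1 else 0)"
proof -
  have no_root_2: "y\<^sup>2 mod 3 \<noteq> 2" for y :: int
  proof -
    have "y\<^sup>2 mod 3 = (y mod 3)\<^sup>2 mod 3"
      by (simp add: power_mod)
    moreover have "y mod 3 = 0 \<or> y mod 3 = 1 \<or> y mod 3 = 2"
      by presburger
    ultimately show ?thesis
      by auto
  qed
  have "j mod 3 = 0 \<or> j mod 3 = 1 \<or> j mod 3 = 2"
    by presburger
  then consider "j mod 3 = 0" | "j mod 3 = 1" | "j mod 3 = 2"
    by blast
  then show ?thesis
  proof cases
    case 2
    then have "QuadRes 3 j"
      unfolding QuadRes_def cong_def by (intro exI[of _ 1]) simp
    with 2 show ?thesis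
      by (simp add: Legendre_def cong_def)
  next
    case 3
    then have "\<not> QuadRes 3 j"
      unfolding QuadRes_def cong_def using no_root_2 by simp
    with 3 show ?thesis
      by (simp add: Legendre_def cong_def)
  qed (simp add: Legendre_def cong_def)
qed

lemma Legendre_3_sum: "Legendre (j + 1) 3 = - Legendre j 3 - Legendre (j - 1) 3"
  unfolding Legendre_3 by presburger

lemma Legendre_3_periodic: "Legendre (j - 2) 3 = Legendre (j + 1) 3"
  unfolding Legendre_3 by presburger

context
  fixes q :: "'a::field fps"
  assumes q_nth_0: "q $ 0 = 0"
begin

lemma qpoch_self_nth_0: "qpoch q q n $ 0 = 1"
  by (induction n) (simp_all add: qpoch_Suc q_nth_0)

lemma qpoch_self_nonzero [simp]: "qpoch q q n \<noteq> 0"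
  using qpoch_self_nth_0[of n] by auto

lemma qbinom_mult:
  assumes "k \<le> n"
  shows "qbinom q (int n) (int k) * (qpoch q q k * qpoch q q (n - k)) = qpoch q q n"
proof -
  have "is_unit (qpoch q q k * qpoch q q (n - k))"
    by (simp add: fps_is_unit_iff qpoch_self_nth_0)
  with assms show ?thesis
    by (simp add: qbinom_def nat_diff_distrib dvd_div_mult_self unit_imp_dvd)
qed

lemma qbinom_eqI:
  assumes "k \<le> n" "qpoch q q n = c * (qpoch q q k * qpoch q q (n - k))"
  shows "qbinom q (int n) (int k) = c"
  using assms by (simp add: qbinom_def nat_diff_distrib)

lemma qbinom_0: "0 \<le> A \<Longrightarrow> qbinom q A 0 = 1"
  using qbinom_eqI[of 0 "nat A" 1] by simp

lemma qbinom_self: "0 \<le> A \<Longrightarrow> qbinom q A A = 1"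
  using qbinom_eqI[of "nat A" "nat A" 1] by simp

lemma qbinom_Suc_Suc:
  assumes "m < n"
  shows "qbinom q (int n + 1) (int m + 1)
           = qbinom q (int n) (int m) + q ^ (m + 1) * qbinom q (int n) (int m + 1)"
proof -
  define D where "D = qpoch q q (m + 1) * qpoch q q (n - m)"
  define P where "P = qpoch q q n"
  have "n - m = Suc (n - (m + 1))"
    using assms by simp
  then have b: "qbinom q (int n) (int m + 1) * D = P * (1 - q ^ (n - m))"
    using qbinom_mult[of "m + 1" n] assms by (simp add: D_def P_def qpoch_Suc ac_simps)
  have a: "qbinom q (int n) (int m) * D = P * (1 - q ^ (m + 1))"
    using qbinom_mult[of m n] assms by (simp add: D_def P_def qpoch_Suc ac_simps)
  have "(qbinom q (int n) (int m) + q ^ (m + 1) * qbinom q (int n) (int m + 1)) * D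
      = P * (1 - q ^ (m + 1)) + q ^ (m + 1) * (P * (1 - q ^ (n - m)))"
    by (simp add: distrib_right mult.assoc a b)
  also have "\<dots> = P * (1 - q ^ (m + 1 + (n - m)))"
    by (simp add: algebra_simps power_add)
  also have "\<dots> = qpoch q q (n + 1)"
    using assms by (simp add: P_def qpoch_Suc)
  finally show ?thesis
    using qbinom_eqI[of "m + 1" "n + 1"] assms by (simp add: D_def add.commute)
qed

lemma qbinom_pascal:
  assumes "0 \<le> A"
  shows "qbinom q (A + 1) k = qbinom q A (k - 1) + q ^ nat k * qbinom q A k"
proof (cases "1 \<le> k \<and> k \<le> A")
  case True
  define m where "m = nat (k - 1)"
  have "k = int m + 1" "m < nat A" "A = int (nat A)"
    using True by (auto simp: m_def)
  then show ?thesis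
    using qbinom_Suc_Suc[of m "nat A"] by (simp add: nat_add_distrib)
next
  case False
  then consider "k < 0" | "k = 0" | "k = A + 1" | "A + 1 < k"
    by linarith
  then show ?thesis
    using assms by cases (simp_all add: qbinom_outside qbinom_0 qbinom_self)
qed

lemma qbinom_pascal':
  assumes "0 \<le> A"
  shows "qbinom q (A + 1) k = qbinom q A k + q ^ nat (A + 1 - k) * qbinom q A (k - 1)"
  using qbinom_pascal[OF assms, of "A + 1 - k"] assms
  by (simp add: qbinom_sym[of "A + 1" _ k] qbinom_sym[of A _ k] qbinom_sym[of A _ "k - 1"]
      diff_diff_eq2)

lemma qbinom_pascal_double:
  assumes "0 \<le> A"
  shows "qbinom q (A + 2) (k + 1) = q ^ nat (k + 1) * qbinom q A (k + 1)
           + (1 + q ^ nat (A + 1)) * qbinom q A k + q ^ nat (A + 1 - k) * qbinom q A (k - 1)"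
proof -
  have middle: "q ^ nat (k + 1) * (q ^ nat (A - k) * qbinom q A k) = q ^ nat (A + 1) * qbinom q A k"
  proof (cases "0 \<le> k \<and> k \<le> A")
    case True
    then have "nat (k + 1) + nat (A - k) = nat (A + 1)"
      by linarith
    then show ?thesis
      by (metis mult.assoc power_add)
  qed (auto simp: qbinom_outside)
  have "qbinom q (A + 2) (k + 1) = qbinom q (A + 1) k + q ^ nat (k + 1) * qbinom q (A + 1) (k + 1)"
    using qbinom_pascal[of "A + 1" "k + 1"] assms by (simp add: add.assoc)
  also have "\<dots> = qbinom q A k + q ^ nat (A + 1 - k) * qbinom q A (k - 1)
      + q ^ nat (k + 1) * (qbinom q A (k + 1) + q ^ nat (A - k) * qbinom q A k)"
    using qbinom_pascal'[OF assms, of k] qbinom_pascal'[OF assms, of "k + 1"] by simp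
  finally show ?thesis
    using middle by (simp add: algebra_simps)
qed

lemma qterm_Suc:
  "qterm q (Suc L) j = q ^ (L + 2) * qterm q L (j + 1) + (1 + q ^ (2 * L + 2)) * qterm q L j
     + q ^ L * qterm q L (j - 1)"
proof -
  define A where "A = 2 * int L + 1"
  define k where "k = int L + j"
  define t where "t = nat (triangular (j - 2))"
  have "qterm q (Suc L) j = q ^ t * qbinom q (A + 2) (k + 1)"
    by (simp add: qterm_def A_def k_def t_def algebra_simps)
  also have "\<dots> = q ^ t * (q ^ nat (k + 1) * qbinom q A (k + 1))
      + q ^ t * ((1 + q ^ nat (A + 1)) * qbinom q A k)
      + q ^ t * (q ^ nat (A + 1 - k) * qbinom q A (k - 1))"
    using qbinom_pascal_double[of A k] by (simp add: A_def distrib_left)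
  also have "q ^ t * (q ^ nat (k + 1) * qbinom q A (k + 1)) = q ^ (L + 2) * qterm q L (j + 1)"
  proof (cases "0 \<le> k + 1")
    case True
    then have "t + nat (k + 1) = L + 2 + nat (triangular (j - 1))"
      using triangular_succ[of "j - 2", simplified] triangular_nonneg[of "j - 2"]
        triangular_nonneg[of "j - 1"]
      unfolding t_def k_def by linarith
    then show ?thesis
      by (simp add: qterm_def A_def k_def add.assoc flip: power_add mult.assoc)
  qed (simp add: qterm_def A_def k_def add.assoc qbinom_outside)
  also have "q ^ t * ((1 + q ^ nat (A + 1)) * qbinom q A k) = (1 + q ^ (2 * L + 2)) * qterm q L j"
  proof -
    have "nat (A + 1) = 2 * L + 2"
      by (simp add: A_def)
    then show ?thesis
      by (simp add: qterm_def A_def k_def t_def mult.left_commute)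
  qed
  also have "q ^ t * (q ^ nat (A + 1 - k) * qbinom q A (k - 1)) = q ^ L * qterm q L (j - 1)"
  proof (cases "0 \<le> A + 1 - k")
    case True
    then have "t + nat (A + 1 - k) = L + nat (triangular (j - 3))"
      using triangular_succ[of "j - 3", simplified] triangular_nonneg[of "j - 3"]
        triangular_nonneg[of "j - 2"]
      unfolding t_def k_def A_def by linarith
    then show ?thesis
      by (simp add: qterm_def A_def k_def add_diff_eq flip: power_add mult.assoc)
  qed (simp add: qterm_def A_def k_def add_diff_eq qbinom_outside)
  finally show ?thesis .
qed

lemma qterm_sum_Suc:
  "qterm_sum q (Suc L) w = q ^ (L + 2) * qterm_sum q L (\<lambda>j. w (j - 1))
     + (1 + q ^ (2 * L + 2)) * qterm_sum q L w
     + q ^ L * qterm_sum q L (\<lambda>j. w (j + 1))"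
proof -
  define I where "I = {- int (Suc L) .. int (Suc L) + 1}"
  have "qterm_sum q (Suc L) w = (\<Sum>j\<in>I. of_int (w j) * qterm q (Suc L) j)"
    by (simp add: qterm_sum_def I_def)
  also have "\<dots> = q ^ (L + 2) * (\<Sum>j\<in>I. of_int (w j) * qterm q L (j + 1))
      + (1 + q ^ (2 * L + 2)) * (\<Sum>j\<in>I. of_int (w j) * qterm q L (j + 0))
      + q ^ L * (\<Sum>j\<in>I. of_int (w j) * qterm q L (j + - 1))"
    by (simp add: qterm_Suc sum.distrib sum_distrib_left algebra_simps)
  also have "\<dots> = q ^ (L + 2) * qterm_sum q L (\<lambda>j. w (j - 1))
      + (1 + q ^ (2 * L + 2)) * qterm_sum q L (\<lambda>j. w (j - 0))
      + q ^ L * qterm_sum q L (\<lambda>j. w (j - - 1))"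
    unfolding I_def by (subst (1 2 3) sum_qterm_shift) auto
  finally show ?thesis
    by simp
qed

lemma qterm_sum_0: "qterm_sum q 0 w = of_int (w 0) * q + of_int (w 1)"
proof -
  have "{- int 0 .. int 0 + 1} = {0, 1 :: int}"
    by auto
  then show ?thesis
    by (simp add: qterm_sum_def qterm_def triangular_def qbinom_0 qbinom_self)
qed

lemma qterm_sum_Legendre_3:
  "qterm_sum q L (\<lambda>j. Legendre j 3) = q ^ L * phi6_prod q L * (1 + q - q ^ (L + 1)) \<and>
   qterm_sum q L (\<lambda>j. Legendre (j - 1) 3) = phi6_prod q L * (1 - q ^ L - q ^ (L + 1))"
proof (induction L)
  case 0
  then show ?case
    by (simp add: qterm_sum_0 phi6_prod_def Legendre_3)
next
  case (Suc L)
  define Q where "Q = q ^ L"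
  define p where "p = phi6_prod q L"
  define a where "a = Q * p * (1 + q - q * Q)"
  define b where "b = p * (1 - Q - q * Q)"
  have A: "qterm_sum q L (\<lambda>j. Legendre j 3) = a"
    and B: "qterm_sum q L (\<lambda>j. Legendre (j - 1) 3) = b"
    using Suc.IH by (simp_all add: a_def b_def Q_def p_def)
  have C: "qterm_sum q L (\<lambda>j. Legendre (j + 1) 3) = - a - b"
    unfolding A [symmetric] B [symmetric] qterm_sum_def
    by (simp add: Legendre_3_sum sum_subtractf sum_negf algebra_simps)
  have P: "phi6_prod q (Suc L) = p * (1 - Q + Q\<^sup>2)"
    by (simp add: phi6_prod_def p_def Q_def power_mult mult.commute)
  have pw: "q ^ (L + 2) = q\<^sup>2 * Q" "q ^ (2 * L + 2) = q\<^sup>2 * Q\<^sup>2" "q ^ Suc L = q * Q"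
    "q ^ (Suc L + 1) = q\<^sup>2 * Q"
    by (simp_all add: Q_def power_add power_mult_distrib power_mult mult.commute
        power2_eq_square)
  have "qterm_sum q (Suc L) (\<lambda>j. Legendre j 3)
      = q\<^sup>2 * Q * b + (1 + q\<^sup>2 * Q\<^sup>2) * a + Q * (- a - b)"
    unfolding qterm_sum_Suc pw Q_def [symmetric] by (simp add: A B C)
  moreover have "qterm_sum q (Suc L) (\<lambda>j. Legendre (j - 1) 3)
      = q\<^sup>2 * Q * (- a - b) + (1 + q\<^sup>2 * Q\<^sup>2) * b + Q * a"
    unfolding qterm_sum_Suc pw Q_def [symmetric] by (simp add: A B C Legendre_3_periodic)
  moreover have "q\<^sup>2 * Q * b + (1 + q\<^sup>2 * Q\<^sup>2) * a + Q * (- a - b)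
      = q * Q * (p * (1 - Q + Q\<^sup>2)) * (1 + q - q\<^sup>2 * Q)"
    by (simp add: a_def b_def algebra_simps power2_eq_square)
  moreover have "q\<^sup>2 * Q * (- a - b) + (1 + q\<^sup>2 * Q\<^sup>2) * b + Q * a
      = p * (1 - Q + Q\<^sup>2) * (1 - q * Q - q\<^sup>2 * Q)"
    by (simp add: a_def b_def algebra_simps power2_eq_square)
  ultimately show ?case
    unfolding P pw by simp
qed

end

theorem theorem2p2:
  fixes L :: nat
  shows "(\<Sum>j\<in>{- int L .. int L + 1}.
            fps_X ^ nat ((j - 1) * (j - 2) div 2) * of_int (Legendre j 3)
              * qbinom fps_X (2 * int L + 1) (int L + j))
         = (fps_X ^ L * (qpoch (-1) (fps_X ^ 3) L / qpoch (-1) fps_X L)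
              * (1 + fps_X - fps_X ^ (L + 1)) :: rat fps)"
proof -
  have "triangular (j - 2) = (j - 1) * (j - 2) div 2" for j
    by (simp add: triangular_def algebra_simps)
  then have "(\<Sum>j\<in>{- int L .. int L + 1}.
            fps_X ^ nat ((j - 1) * (j - 2) div 2) * of_int (Legendre j 3)
              * qbinom fps_X (2 * int L + 1) (int L + j))
      = (qterm_sum fps_X L (\<lambda>j. Legendre j 3) :: rat fps)"
    by (simp add: qterm_sum_def qterm_def mult_ac)
  also have "\<dots> = fps_X ^ L * phi6_prod fps_X L * (1 + fps_X - fps_X ^ (L + 1))"
    using qterm_sum_Legendre_3[of "fps_X :: rat fps" L] by simp
  also have "phi6_prod fps_X L = qpoch (-1) (fps_X ^ 3) L / (qpoch (-1) fps_X L :: rat fps)"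
    by (simp add: qpoch_minus_one_cube qpoch_minus_one_nonzero)
  finally show ?thesis .
qed

end
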